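(* Let $L'$ be a finite $0$-distributive lattice with exactly $n$ atoms. Then there exists a blow-up $L^B$ of the Boolean lattice $L\cong\mathbf{2}^n$ such that the zero-divisor graphs $G(L')$ and $G(L^B)$ are isomorphic (indeed the chain replacing an element of $L$ has as many elements as the corresponding $\sim$-class of $L'$).
   Context: A lattice $M$ with $0$ is $0$-distributive if $a\wedge b=0$ and $a\wedge c=0$ imply $a\wedge(b\vee c)=0$. For a lattice $M$ with $0$, $a^{\perp}=\{b: a\wedge b=0\}$, $x\sim y$ iff $x^\perp=y^\perp$, $[x]$ is the class of $x$, and $[M]$ is the set of classes ordered by $[a]\le[b]$ iff $b^{\perp}\subseteq a^{\perp}$. The zero-divisor graph $G(M)$ has as vertices the nonzero $a\in M$ with $a\wedge b=0$ for some nonzero $b$, distinct $a,b$ adjacent iff $a\wedge b=0$. Blow-up: for $L\cong\mathbf{2}^n$, replace each $a\in L\setminus\{0,1\}$ by a finite chain $C_a$: $a=a^1\lessdot\cdots\lessdot a^{k_a}$, keep $0,1$; elements in one chain are ordered along it, and for $u\in C_a,v\in C_b$ with $a\ne b$ ($C_0=\{0\},C_1=\{1\}$), $u\le v$ iff $a<b$ in $L$. *)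

theory Defs
  imports Main
begin

definition zero_distributive :: "'a::bounded_lattice itself \<Rightarrow> bool" where
  "zero_distributive _ \<longleftrightarrow>
     (\<forall>a b c::'a. inf a b = bot \<and> inf a c = bot \<longrightarrow> inf a (sup b c) = bot)"

definition is_atom :: "'a::bounded_lattice \<Rightarrow> bool" where
  "is_atom a \<longleftrightarrow> a \<noteq> bot \<and> (\<forall>b. b \<le> a \<longrightarrow> b = bot \<or> b = a)"

definition perp :: "'a::bounded_lattice \<Rightarrow> 'a set" where
  "perp a = {b. inf a b = bot}"

definition perp_equiv :: "'a::bounded_lattice \<Rightarrow> 'a \<Rightarrow> bool" where
  "perp_equiv x y \<longleftrightarrow> perp x = perp y"

(* Zero-divisor graph of a structure given by a carrier S, a zero element z, and the
   predicate zm a b meaning "a \<and> b = 0". *)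
definition zd_vertices :: "'a set \<Rightarrow> 'a \<Rightarrow> ('a \<Rightarrow> 'a \<Rightarrow> bool) \<Rightarrow> 'a set" where
  "zd_vertices S z zm = {a \<in> S. a \<noteq> z \<and> (\<exists>b\<in>S. b \<noteq> z \<and> zm a b)}"

definition zd_adj :: "('a \<Rightarrow> 'a \<Rightarrow> bool) \<Rightarrow> 'a \<Rightarrow> 'a \<Rightarrow> bool" where
  "zd_adj zm a b \<longleftrightarrow> a \<noteq> b \<and> zm a b"

definition zd_graph_iso ::
  "'a set \<Rightarrow> 'a \<Rightarrow> ('a \<Rightarrow> 'a \<Rightarrow> bool) \<Rightarrow> 'b set \<Rightarrow> 'b \<Rightarrow> ('b \<Rightarrow> 'b \<Rightarrow> bool) \<Rightarrow> bool" where
  "zd_graph_iso S1 z1 zm1 S2 z2 zm2 \<longleftrightarrow>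
     (\<exists>f. bij_betw f (zd_vertices S1 z1 zm1) (zd_vertices S2 z2 zm2) \<and>
          (\<forall>a\<in>zd_vertices S1 z1 zm1. \<forall>b\<in>zd_vertices S1 z1 zm1.
              zd_adj zm1 a b \<longleftrightarrow> zd_adj zm2 (f a) (f b)))"

definition lat_zm :: "'a::bounded_lattice \<Rightarrow> 'a \<Rightarrow> bool" where
  "lat_zm a b \<longleftrightarrow> inf a b = bot"

(* Blow-up of the Boolean lattice 2^n, realized as subsets of {..<n}.
   The element a \<subseteq> {..<n}, a \<noteq> {}, a \<noteq> {..<n}, is replaced by the chain
   (a,1) < (a,2) < ... < (a, k a); the bottom {} and top {..<n} are kept as ({},1), ({..<n},1). *)
definition blowup_carrier :: "nat \<Rightarrow> (nat set \<Rightarrow> nat) \<Rightarrow> (nat set \<times> nat) set" where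
  "blowup_carrier n k = {(a,i). a \<subseteq> {..<n} \<and>
      (if a = {} \<or> a = {..<n} then i = 1 else 1 \<le> i \<and> i \<le> k a)}"

definition blowup_le :: "nat set \<times> nat \<Rightarrow> nat set \<times> nat \<Rightarrow> bool" where
  "blowup_le u v \<longleftrightarrow> (fst u = fst v \<and> snd u \<le> snd v) \<or> fst u \<subset> fst v"

definition blowup_bot :: "nat set \<times> nat" where
  "blowup_bot = ({}, 1)"

definition blowup_zm :: "nat \<Rightarrow> (nat set \<Rightarrow> nat) \<Rightarrow> nat set \<times> nat \<Rightarrow> nat set \<times> nat \<Rightarrow> bool" where
  "blowup_zm n k u v \<longleftrightarrow>
     (\<forall>w\<in>blowup_carrier n k. blowup_le w u \<and> blowup_le w v \<longrightarrow> w = blowup_bot)"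

end

theory Submission imports Defs begin

text \<open>In a finite lattice an element x determines its annihilator x^\<perp> through the set of atoms
below it: x \<and> b = 0 iff no atom lies below both. Zero-distributivity makes every set of atoms
occur (a join of atoms has exactly those atoms below it), so numbering the n atoms labels the
\<sim>-classes by the subsets of {..<n}, and x \<and> y = 0 iff the labels are disjoint. Thus the zero-divisor
graph is determined by the labelling: its vertices are the elements whose label is neither empty
nor full, and adjacency is disjointness of labels. The blow-up, labelled by the first component,
has exactly the same description, with a fibre of size k a over each label a; any bijection
preserving labels is therefore a graph isomorphism.\<close>

definition atoms_below :: "'a::bounded_lattice \<Rightarrow> 'a set" where
  "atoms_below x = {p. is_atom p \<and> p \<le> x}"

lemma atom_inf_eq_bot_or_le:
  fixes p :: "'a::bounded_lattice"
  assumes "is_atom p" shows "inf p x = bot \<or> p \<le> x"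
  using assms unfolding is_atom_def by (metis inf.cobounded1 inf.absorb_iff1)

lemma atoms_below_inf: "atoms_below (inf x y) = atoms_below x \<inter> atoms_below y"
  by (auto simp: atoms_below_def)

lemma atoms_below_bot: "atoms_below (bot::'a::bounded_lattice) = {}"
  by (auto simp: atoms_below_def is_atom_def bot_unique)

lemma atoms_below_atom: "is_atom p \<Longrightarrow> atoms_below p = {p}"
  by (auto simp: atoms_below_def is_atom_def)

lemma atoms_below_subset_atoms: "atoms_below x \<subseteq> {p. is_atom p}"
  by (auto simp: atoms_below_def)

lemma atoms_below_sup:
  fixes x y :: "'a::bounded_lattice"
  assumes zd: "zero_distributive TYPE('a)"
  shows "atoms_below (sup x y) = atoms_below x \<union> atoms_below y"
proof
  show "atoms_below (sup x y) \<subseteq> atoms_below x \<union> atoms_below y"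
  proof
    fix p assume "p \<in> atoms_below (sup x y)"
    hence p: "is_atom p" "p \<le> sup x y" by (auto simp: atoms_below_def)
    show "p \<in> atoms_below x \<union> atoms_below y"
    proof (rule ccontr)
      assume "p \<notin> atoms_below x \<union> atoms_below y"
      hence "inf p x = bot" "inf p y = bot"
        using atom_inf_eq_bot_or_le[OF p(1)] p(1) by (auto simp: atoms_below_def)
      hence "inf p (sup x y) = bot" using zd unfolding zero_distributive_def by blast
      with p show False by (simp add: inf.absorb1 is_atom_def)
    qed
  qed
qed (auto simp: atoms_below_def intro: le_supI1 le_supI2)

lemma exists_atom_below:
  fixes x :: "'a::{finite,bounded_lattice}"
  assumes "x \<noteq> bot" shows "\<exists>p. is_atom p \<and> p \<le> x"
proof -
  from assms obtain m where m: "m \<noteq> bot" "m \<le> x" and minimal: "\<And>b. b \<noteq> bot \<Longrightarrow> b \<le> m \<Longrightarrow> b = m"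
    using finite_has_minimal2[of "{y. y \<noteq> bot \<and> y \<le> x}" x] by (auto intro: order_trans)
  have "is_atom m" unfolding is_atom_def using m(1) minimal by blast
  with m(2) show ?thesis by blast
qed

lemma atoms_below_eq_empty_iff:
  fixes x :: "'a::{finite,bounded_lattice}"
  shows "atoms_below x = {} \<longleftrightarrow> x = bot"
  using exists_atom_below atoms_below_bot unfolding atoms_below_def by blast

(* The right-hand side is again an instance of the left-hand side, at the finite lattice 'a set,
   so this must never be given to the simplifier uninstantiated: it loops. *)
lemma inf_eq_bot_iff_atoms_below_disjoint:
  fixes x y :: "'a::{finite,bounded_lattice}"
  shows "inf x y = bot \<longleftrightarrow> atoms_below x \<inter> atoms_below y = {}"
  by (simp add: atoms_below_eq_empty_iff flip: atoms_below_inf)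

lemma perp_subset_iff_atoms_below_subset:
  fixes x y :: "'a::{finite,bounded_lattice}"
  shows "perp y \<subseteq> perp x \<longleftrightarrow> atoms_below x \<subseteq> atoms_below y"
proof
  assume perp: "perp y \<subseteq> perp x"
  show "atoms_below x \<subseteq> atoms_below y"
  proof
    fix p assume "p \<in> atoms_below x"
    hence p: "is_atom p" "p \<le> x" by (auto simp: atoms_below_def)
    have "p \<le> y"
    proof (rule ccontr)
      assume "\<not> p \<le> y"
      hence "inf y p = bot"
        using atom_inf_eq_bot_or_le[OF p(1), of y] by (simp add: inf_commute)
      hence "p \<in> perp y" by (simp add: perp_def)
      hence "inf x p = bot" using perp by (auto simp: perp_def)
      hence "p = bot" using p(2) by (simp add: inf.absorb2)
      with p(1) show False by (simp add: is_atom_def)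
    qed
    with p show "p \<in> atoms_below y" by (simp add: atoms_below_def)
  qed
next
  assume "atoms_below x \<subseteq> atoms_below y"
  thus "perp y \<subseteq> perp x"
    unfolding perp_def
    by (auto simp: inf_eq_bot_iff_atoms_below_disjoint[of x] inf_eq_bot_iff_atoms_below_disjoint[of y])
qed

lemma zero_divisor_iff_atoms_below_proper:
  fixes x :: "'a::{finite,bounded_lattice}"
  shows "(\<exists>b. b \<noteq> bot \<and> inf x b = bot) \<longleftrightarrow> atoms_below x \<noteq> {p. is_atom p}"
proof
  assume "\<exists>b. b \<noteq> bot \<and> inf x b = bot"
  then obtain b where "atoms_below b \<noteq> {}" "atoms_below x \<inter> atoms_below b = {}"
    by (auto simp only: atoms_below_eq_empty_iff inf_eq_bot_iff_atoms_below_disjoint[of x])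
  thus "atoms_below x \<noteq> {p. is_atom p}" using atoms_below_subset_atoms[of b] by blast
next
  assume "atoms_below x \<noteq> {p. is_atom p}"
  then obtain p where p: "is_atom p" "\<not> p \<le> x" by (auto simp: atoms_below_def)
  hence "inf x p = bot" using atom_inf_eq_bot_or_le[of p x] by (simp add: inf_commute)
  moreover have "p \<noteq> bot" using p(1) by (simp add: is_atom_def)
  ultimately show "\<exists>b. b \<noteq> bot \<and> inf x b = bot" by blast
qed

lemma range_atoms_below:
  assumes zd: "zero_distributive TYPE('a::{finite,bounded_lattice})"
  shows "range (atoms_below :: 'a \<Rightarrow> 'a set) = Pow {p. is_atom p}"
proof
  show "range (atoms_below :: 'a \<Rightarrow> 'a set) \<subseteq> Pow {p. is_atom p}"
    by (auto simp: atoms_below_def)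
  show "Pow {p. is_atom p} \<subseteq> range (atoms_below :: 'a \<Rightarrow> 'a set)"
  proof
    fix T :: "'a set" assume "T \<in> Pow {p. is_atom p}"
    then show "T \<in> range atoms_below"
    proof (induction T rule: finite_induct[OF finite])
      case 1
      show ?case using atoms_below_bot[symmetric] by (rule range_eqI)
    next
      case (2 q T)
      then obtain x where x: "atoms_below x = T" by auto
      have "atoms_below q = {q}" using "2.prems" by (simp add: atoms_below_atom)
      with x have "insert q T = atoms_below (sup x q)"
        using atoms_below_sup[OF zd, of x q] by simp
      thus ?case by (rule range_eqI)
    qed
  qed
qed

context
  fixes e :: "'a::{finite,bounded_lattice} \<Rightarrow> 'b" and I :: "'b set"
  assumes e: "bij_betw e {p. is_atom p} I"
begin

lemma image_atoms_below_subset_iff: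
  "e ` atoms_below x \<subseteq> e ` atoms_below y \<longleftrightarrow> perp y \<subseteq> perp x"
  using bij_betw_imp_inj_on[OF e] atoms_below_subset_atoms[of x] atoms_below_subset_atoms[of y]
  unfolding perp_subset_iff_atoms_below_subset inj_on_def by blast

lemma lat_zm_iff_image_atoms_below_disjoint:
  "lat_zm x y \<longleftrightarrow> e ` atoms_below x \<inter> e ` atoms_below y = {}"
proof -
  have "e ` atoms_below x \<inter> e ` atoms_below y = e ` (atoms_below x \<inter> atoms_below y)"
    using inj_on_image_Int[OF bij_betw_imp_inj_on[OF e] atoms_below_subset_atoms atoms_below_subset_atoms]
    by (rule sym)
  thus ?thesis by (simp add: lat_zm_def inf_eq_bot_iff_atoms_below_disjoint[of x])
qed

lemma range_image_atoms_below:
  assumes "zero_distributive TYPE('a)"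
  shows "range (\<lambda>x. e ` atoms_below x) = Pow I"
proof -
  have "range (\<lambda>x. e ` atoms_below x) = image e ` range atoms_below" by (rule range_composition)
  also have "\<dots> = Pow I"
    unfolding range_atoms_below[OF assms] using bij_betw_imp_surj_on[OF e] by (rule image_Pow_surj)
  finally show ?thesis .
qed

lemma zd_vertices_lattice:
  "zd_vertices UNIV bot lat_zm = {x. e ` atoms_below x \<noteq> {} \<and> e ` atoms_below x \<noteq> I}"
proof -
  have top: "e ` atoms_below x = I \<longleftrightarrow> atoms_below x = {p. is_atom p}" for x
    using inj_on_image_eq_iff[OF bij_betw_imp_inj_on[OF e] atoms_below_subset_atoms order_refl]
    by (simp add: bij_betw_imp_surj_on[OF e])
  have "x \<in> zd_vertices UNIV bot lat_zm \<longleftrightarrow> x \<noteq> bot \<and> (\<exists>b. b \<noteq> bot \<and> inf x b = bot)" for x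
    unfolding zd_vertices_def lat_zm_def by blast
  also have "\<dots> x \<longleftrightarrow> e ` atoms_below x \<noteq> {} \<and> e ` atoms_below x \<noteq> I" for x
    unfolding top zero_divisor_iff_atoms_below_proper image_is_empty atoms_below_eq_empty_iff ..
  finally show ?thesis by blast
qed

end

lemma bij_betw_fibrewise:
  assumes "\<And>c. finite {x\<in>A. f x = c}" and "\<And>c. finite {y\<in>B. g y = c}"
    and "\<And>c. card {x\<in>A. f x = c} = card {y\<in>B. g y = c}"
  shows "\<exists>h. bij_betw h A B \<and> (\<forall>x\<in>A. g (h x) = f x)"
proof -
  have "\<forall>c. \<exists>h. bij_betw h {x\<in>A. f x = c} {y\<in>B. g y = c}"
    using finite_same_card_bij[OF assms] by blast
  then obtain hc where hc: "\<And>c. bij_betw (hc c) {x\<in>A. f x = c} {y\<in>B. g y = c}"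
    by metis
  define h where "h x = hc (f x) x" for x
  have h_fibre: "h x \<in> {y\<in>B. g y = f x}" if "x \<in> A" for x
    using bij_betwE[OF hc] that by (simp add: h_def)
  have "inj_on h A"
  proof (rule inj_onI)
    fix x y assume x: "x \<in> A" and y: "y \<in> A" and eq: "h x = h y"
    hence "f y = f x" using h_fibre[OF x] h_fibre[OF y] by simp
    hence "y \<in> {x'\<in>A. f x' = f x}" using y by simp
    moreover have "x \<in> {x'\<in>A. f x' = f x}" using x by simp
    moreover have "hc (f x) x = hc (f x) y" using eq \<open>f y = f x\<close> by (simp add: h_def)
    ultimately show "x = y" using inj_onD[OF bij_betw_imp_inj_on[OF hc[of "f x"]]] by blast
  qed
  moreover have "h ` A = B"
  proof
    show "h ` A \<subseteq> B" using h_fibre by blast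
    show "B \<subseteq> h ` A"
    proof
      fix y assume "y \<in> B"
      hence "y \<in> hc (g y) ` {x\<in>A. f x = g y}" using bij_betw_imp_surj_on[OF hc[of "g y"]] by simp
      then obtain x where x: "x \<in> {x\<in>A. f x = g y}" and "y = hc (g y) x" by (rule imageE)
      hence "y = h x" by (simp add: h_def)
      with x show "y \<in> h ` A" by blast
    qed
  qed
  ultimately show ?thesis using h_fibre unfolding bij_betw_def by blast
qed

lemma zd_graph_isoI:
  assumes h: "bij_betw h (zd_vertices S1 z1 zm1) (zd_vertices S2 z2 zm2)"
    and zm: "\<And>x y. x \<in> zd_vertices S1 z1 zm1 \<Longrightarrow> y \<in> zd_vertices S1 z1 zm1 \<Longrightarrow>
                   zm2 (h x) (h y) \<longleftrightarrow> zm1 x y"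
  shows "zd_graph_iso S1 z1 zm1 S2 z2 zm2"
  unfolding zd_graph_iso_def zd_adj_def
proof (intro exI conjI ballI)
  show "bij_betw h (zd_vertices S1 z1 zm1) (zd_vertices S2 z2 zm2)" by (fact h)
  fix x y assume "x \<in> zd_vertices S1 z1 zm1" "y \<in> zd_vertices S1 z1 zm1"
  moreover from this have "h x = h y \<longleftrightarrow> x = y"
    by (meson bij_betw_imp_inj_on h inj_on_eq_iff)
  ultimately show "x \<noteq> y \<and> zm1 x y \<longleftrightarrow> h x \<noteq> h y \<and> zm2 (h x) (h y)"
    using zm by blast
qed

lemma blowup_carrier_empty_iff: "(({}, i) \<in> blowup_carrier n k) \<longleftrightarrow> i = 1"
  by (simp add: blowup_carrier_def)

lemma blowup_carrier_fst_subset: "u \<in> blowup_carrier n k \<Longrightarrow> fst u \<subseteq> {..<n}"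
  by (auto simp: blowup_carrier_def)

context
  fixes n :: nat and k :: "nat set \<Rightarrow> nat"
  assumes k_pos: "\<And>a. a \<subseteq> {..<n} \<Longrightarrow> a \<noteq> {} \<Longrightarrow> a \<noteq> {..<n} \<Longrightarrow> 1 \<le> k a"
begin

lemma chain_bottom_in_blowup_carrier: "a \<subseteq> {..<n} \<Longrightarrow> (a, 1) \<in> blowup_carrier n k"
  using k_pos by (simp add: blowup_carrier_def)

lemma blowup_zm_iff_disjoint:
  assumes u: "u \<in> blowup_carrier n k" and v: "v \<in> blowup_carrier n k"
  shows "blowup_zm n k u v \<longleftrightarrow> fst u \<inter> fst v = {}"
proof
  assume zm: "blowup_zm n k u v"
  let ?w = "(fst u \<inter> fst v, 1::nat)"
  have "?w \<in> blowup_carrier n k"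
    using blowup_carrier_fst_subset[OF u] by (intro chain_bottom_in_blowup_carrier) blast
  moreover have "1 \<le> snd u" "1 \<le> snd v"
    using u v by (auto simp: blowup_carrier_def split: if_splits)
  hence "blowup_le ?w u" "blowup_le ?w v"
    by (auto simp: blowup_le_def psubset_eq)
  ultimately have "?w = blowup_bot" using zm by (simp add: blowup_zm_def)
  thus "fst u \<inter> fst v = {}" by (simp add: blowup_bot_def)
next
  assume disjoint: "fst u \<inter> fst v = {}"
  show "blowup_zm n k u v"
    unfolding blowup_zm_def
  proof (intro ballI impI)
    fix w assume w: "w \<in> blowup_carrier n k" and "blowup_le w u \<and> blowup_le w v"
    hence "fst w \<subseteq> fst u \<inter> fst v" by (auto simp: blowup_le_def)
    hence "fst w = {}" using disjoint by blast
    with w show "w = blowup_bot"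
      using blowup_carrier_empty_iff by (cases w) (simp add: blowup_bot_def)
  qed
qed

lemma zd_vertices_blowup:
  "zd_vertices (blowup_carrier n k) blowup_bot (blowup_zm n k) =
     {u \<in> blowup_carrier n k. fst u \<noteq> {} \<and> fst u \<noteq> {..<n}}"
proof -
  have nonzero: "u \<noteq> blowup_bot \<longleftrightarrow> fst u \<noteq> {}" if "u \<in> blowup_carrier n k" for u
    using that blowup_carrier_empty_iff by (cases u) (auto simp: blowup_bot_def)
  have "(\<exists>v\<in>blowup_carrier n k. v \<noteq> blowup_bot \<and> blowup_zm n k u v) \<longleftrightarrow> fst u \<noteq> {..<n}"
    if u: "u \<in> blowup_carrier n k" for u
  proof
    assume "\<exists>v\<in>blowup_carrier n k. v \<noteq> blowup_bot \<and> blowup_zm n k u v"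
    then obtain v where v: "v \<in> blowup_carrier n k" "fst v \<noteq> {}" "fst u \<inter> fst v = {}"
      using nonzero blowup_zm_iff_disjoint[OF u] by blast
    thus "fst u \<noteq> {..<n}" using blowup_carrier_fst_subset[OF v(1)] by blast
  next
    assume "fst u \<noteq> {..<n}"
    hence "{..<n} - fst u \<noteq> {}" using blowup_carrier_fst_subset[OF u] by blast
    moreover have v: "({..<n} - fst u, 1) \<in> blowup_carrier n k"
      by (rule chain_bottom_in_blowup_carrier) blast
    ultimately show "\<exists>v\<in>blowup_carrier n k. v \<noteq> blowup_bot \<and> blowup_zm n k u v"
      using nonzero[OF v] blowup_zm_iff_disjoint[OF u v] by auto
  qed
  thus ?thesis
    unfolding zd_vertices_def using nonzero by blast
qed

end

lemma blowup_carrier_fibre: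
  assumes "a \<subseteq> {..<n}" "a \<noteq> {}" "a \<noteq> {..<n}"
  shows "{u \<in> blowup_carrier n k. fst u = a} = {a} \<times> {1..k a}"
  using assms by (auto simp: blowup_carrier_def)

lemma zd_graph_iso_blowup:
  fixes \<phi> :: "'a \<Rightarrow> nat set"
  assumes "finite S"
    and vertices: "zd_vertices S z zm = {x\<in>S. \<phi> x \<noteq> {} \<and> \<phi> x \<noteq> {..<n}}"
    and zm: "\<And>x y. x \<in> S \<Longrightarrow> y \<in> S \<Longrightarrow> zm x y \<longleftrightarrow> \<phi> x \<inter> \<phi> y = {}"
    and into: "\<And>x. x \<in> S \<Longrightarrow> \<phi> x \<subseteq> {..<n}"
    and k_pos: "\<And>a. a \<subseteq> {..<n} \<Longrightarrow> a \<noteq> {} \<Longrightarrow> a \<noteq> {..<n} \<Longrightarrow> 1 \<le> k a"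
    and k_card: "\<And>a. a \<subseteq> {..<n} \<Longrightarrow> a \<noteq> {} \<Longrightarrow> a \<noteq> {..<n} \<Longrightarrow> k a = card {x\<in>S. \<phi> x = a}"
  shows "zd_graph_iso S z zm (blowup_carrier n k) blowup_bot (blowup_zm n k)"
proof -
  let ?V = "{x\<in>S. \<phi> x \<noteq> {} \<and> \<phi> x \<noteq> {..<n}}"
  let ?W = "{u \<in> blowup_carrier n k. fst u \<noteq> {} \<and> fst u \<noteq> {..<n}}"
  have fibres: "finite {x\<in>?V. \<phi> x = a} \<and> finite {u\<in>?W. fst u = a} \<and>
      card {x\<in>?V. \<phi> x = a} = card {u\<in>?W. fst u = a}" for a
  proof (cases "a \<subseteq> {..<n} \<and> a \<noteq> {} \<and> a \<noteq> {..<n}")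
    case True
    hence "{x\<in>?V. \<phi> x = a} = {x\<in>S. \<phi> x = a}" "{u\<in>?W. fst u = a} = {a} \<times> {1..k a}"
      using blowup_carrier_fibre[of a n k] by auto
    thus ?thesis using \<open>finite S\<close> k_card True by (simp add: card_cartesian_product)
  next
    case False
    hence "{x\<in>?V. \<phi> x = a} = {}" using into by blast
    moreover have "{u\<in>?W. fst u = a} = {}" using False blowup_carrier_fst_subset by blast
    ultimately show ?thesis by (metis card.empty finite.emptyI)
  qed
  obtain h where h: "bij_betw h ?V ?W" and h_fst: "\<And>x. x \<in> ?V \<Longrightarrow> fst (h x) = \<phi> x"
    using bij_betw_fibrewise[of ?V \<phi> ?W fst] fibres by blast
  have "zd_vertices (blowup_carrier n k) blowup_bot (blowup_zm n k) = ?W"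
    by (rule zd_vertices_blowup) (fact k_pos)
  show ?thesis
  proof (rule zd_graph_isoI)
    show "bij_betw h (zd_vertices S z zm) (zd_vertices (blowup_carrier n k) blowup_bot (blowup_zm n k))"
      unfolding vertices \<open>zd_vertices _ _ _ = ?W\<close> by (fact h)
  next
    fix x y assume "x \<in> zd_vertices S z zm" "y \<in> zd_vertices S z zm"
    hence xy: "x \<in> ?V" "y \<in> ?V" unfolding vertices .
    hence "h x \<in> blowup_carrier n k" "h y \<in> blowup_carrier n k" using bij_betwE[OF h] by blast+
    thus "blowup_zm n k (h x) (h y) \<longleftrightarrow> zm x y"
      using blowup_zm_iff_disjoint[OF k_pos] zm h_fst xy by simp
  qed
qed

theorem mainTheorem4:
  fixes n :: nat
  assumes "zero_distributive TYPE('a::{finite, bounded_lattice})"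
      and "card {a::'a. is_atom a} = n"
  shows "\<exists>k :: nat set \<Rightarrow> nat.
           (\<forall>a. a \<subseteq> {..<n} \<and> a \<noteq> {} \<and> a \<noteq> {..<n} \<longrightarrow> 1 \<le> k a) \<and>
           (\<exists>\<phi> :: 'a \<Rightarrow> nat set.
              (\<forall>x y. \<phi> x = \<phi> y \<longleftrightarrow> perp_equiv x y) \<and>
              \<phi> ` UNIV = Pow {..<n} \<and>
              (\<forall>x y. \<phi> x \<subseteq> \<phi> y \<longleftrightarrow> perp y \<subseteq> perp x) \<and>
              (\<forall>x. \<phi> x \<noteq> {} \<and> \<phi> x \<noteq> {..<n} \<longrightarrow> k (\<phi> x) = card {y. perp_equiv y x})) \<and>
           zd_graph_iso (UNIV :: 'a set) bot lat_zm
                        (blowup_carrier n k) blowup_bot (blowup_zm n k)"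
proof -
  obtain e :: "'a \<Rightarrow> nat" where e: "bij_betw e {p. is_atom p} {..<n}"
    using finite_same_card_bij[of "{p::'a. is_atom p}" "{..<n}"] assms(2) by auto
  define \<phi> where "\<phi> x = e ` atoms_below x" for x
  define k where "k a = card {x. \<phi> x = a}" for a
  have range: "range \<phi> = Pow {..<n}"
    unfolding \<phi>_def by (rule range_image_atoms_below[OF e assms(1)])
  have subset_iff: "\<phi> x \<subseteq> \<phi> y \<longleftrightarrow> perp y \<subseteq> perp x" for x y
    unfolding \<phi>_def by (rule image_atoms_below_subset_iff[OF e])
  have eq_iff: "\<phi> x = \<phi> y \<longleftrightarrow> perp_equiv x y" for x y
    using subset_iff[of x y] subset_iff[of y x] unfolding perp_equiv_def by blast
  have k_pos: "1 \<le> k a" if "a \<subseteq> {..<n}" for a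
  proof -
    have "a \<in> range \<phi>" using range that by simp
    hence "{x. \<phi> x = a} \<noteq> {}" by blast
    thus ?thesis by (simp add: k_def Suc_le_eq card_gt_0_iff)
  qed
  have "zd_graph_iso (UNIV :: 'a set) bot lat_zm (blowup_carrier n k) blowup_bot (blowup_zm n k)"
  proof (rule zd_graph_iso_blowup[where \<phi> = \<phi>])
    show "zd_vertices UNIV bot lat_zm = {x \<in> UNIV. \<phi> x \<noteq> {} \<and> \<phi> x \<noteq> {..<n}}"
      unfolding \<phi>_def using zd_vertices_lattice[OF e] by simp
    show "lat_zm x y \<longleftrightarrow> \<phi> x \<inter> \<phi> y = {}" for x y
      unfolding \<phi>_def by (rule lat_zm_iff_image_atoms_below_disjoint[OF e])
  qed (use range k_pos in \<open>auto simp: k_def\<close>)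
  moreover have "k (\<phi> x) = card {y. perp_equiv y x}" for x
    using eq_iff by (simp add: k_def)
  ultimately show ?thesis
    using range subset_iff eq_iff k_pos by (intro exI[of _ k] conjI exI[of _ \<phi>]) auto
qed

end
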